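(* Let $m\ge2$, $0<h<2^m$ and $k\in\mathbb{Z}_0^m$. Then: the support $\mathrm{supp}\,\tau_k$ is a strictly convex compact $(m-1)$-dimensional body in $\mathbb{H}$; $\tau_k$ is nonnegative and strictly concave on $\mathrm{supp}\,\tau_k$; and $\tau_k$ is continuous on $\mathbb{H}$.
   Context: $s(t)=2\sin(t/2)$; $\mathbb{V}(h)=\{x\in\mathbb{R}^m:|\prod_{j=1}^m s(x_j)|\ge h\}$; $\mathbb{V}_0(h)=\mathbb{V}(h)\cap[0,2\pi]^m$; $\mathbb{V}_k(h)=\mathbb{V}_0(h)+2\pi k$ for $k\in\mathbb{Z}^m$. $\mathbb{Z}_0^m=\{0\}\times\mathbb{Z}^{m-1}$. $\mathcal{E}=(1,\dots,1)$, $\ell(x)=\{x+t\mathcal{E}:t\in\mathbb{R}\}$, and $\mathbb{H}=\{x\in\mathbb{R}^m:\sum_j x_j=0\}$. For $x\in\mathbb{H}$, $\tau_k(x)=\mathrm{mes}_1(\ell(x)\cap\mathbb{V}_k(h))$ (length of the intersection). $\mathrm{supp}\,\tau_k=\{x\in\mathbb{H}:\ell(x)\cap\mathbb{V}_k(h)\ne\emptyset\}$, the orthogonal projection of $\mathbb{V}_k(h)$ onto $\mathbb{H}$. *)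

theory Defs
  imports "HOL-Analysis.Analysis"
begin

text \<open>Points of R^m are vectors real^'n with m = CARD('n). The index type carries a
  well-order so that it has a distinguished first coordinate (used for Z_0^m).\<close>

definition sfun :: "real \<Rightarrow> real" where
  "sfun t = 2 * sin (t / 2)"

definition VV :: "real \<Rightarrow> (real ^ 'n) set" where
  "VV h = {x. \<bar>\<Prod>j\<in>UNIV. sfun (x $ j)\<bar> \<ge> h}"

definition VV0 :: "real \<Rightarrow> (real ^ 'n) set" where
  "VV0 h = VV h \<inter> {x. \<forall>j. 0 \<le> x $ j \<and> x $ j \<le> 2 * pi}"

definition VVk :: "real \<Rightarrow> int ^ 'n \<Rightarrow> (real ^ 'n) set" where
  "VVk h k = (\<lambda>x. x + (\<chi> j. 2 * pi * of_int (k $ j))) ` VV0 h"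

definition first_idx :: "'n::wellorder" where
  "first_idx = (LEAST i. True)"

definition Z0 :: "(int ^ 'n::{finite,wellorder}) set" where
  "Z0 = {k. k $ first_idx = 0}"

definition EE :: "real ^ 'n" where
  "EE = (\<chi> j. 1)"

definition HH :: "(real ^ 'n) set" where
  "HH = {x. (\<Sum>j\<in>UNIV. x $ j) = 0}"

text \<open>tau_k(x) = length (1-dim Lebesgue measure) of the intersection of the line
  through x in direction E with V_k(h); the line is parametrised by t with speed norm E.\<close>
definition tau :: "real \<Rightarrow> int ^ 'n \<Rightarrow> real ^ 'n \<Rightarrow> real" where
  "tau h k x = norm (EE :: real ^ 'n) * measure lborel {t::real. x + t *\<^sub>R EE \<in> VVk h k}"

definition supp_tau :: "real \<Rightarrow> int ^ 'n \<Rightarrow> (real ^ 'n) set" where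
  "supp_tau h k = {x \<in> HH. \<exists>t::real. x + t *\<^sub>R EE \<in> VVk h k}"

definition strictly_convex_set :: "'a::euclidean_space set \<Rightarrow> bool" where
  "strictly_convex_set S \<longleftrightarrow> convex S \<and>
     (\<forall>x\<in>S. \<forall>y\<in>S. x \<noteq> y \<longrightarrow> open_segment x y \<subseteq> rel_interior S)"

definition strictly_concave_on :: "'a::real_vector set \<Rightarrow> ('a \<Rightarrow> real) \<Rightarrow> bool" where
  "strictly_concave_on S f \<longleftrightarrow> convex S \<and>
     (\<forall>x\<in>S. \<forall>y\<in>S. \<forall>u::real. x \<noteq> y \<and> 0 < u \<and> u < 1 \<longrightarrow>
        f ((1 - u) *\<^sub>R x + u *\<^sub>R y) > (1 - u) * f x + u * f y)"

end

theory Submission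
  imports Defs
begin

(*
  The support of tau_k is the shadow of the body K = V_k(h) under the projection onto the
  hyperplane H orthogonal to E along E, and tau_k(x) is (up to the factor |E|) the length
  of the fibre of K over x, i.e. of the set of t with x + tE in K.

  1. A general statement about bodies in a Euclidean space and an arbitrary direction d:
     if K is compact and strictly convex in the sense that every open segment between two
     points of K lies in the interior of K, then its shadow is compact and strictly convex,
     its fibres are compact intervals, and the fibre length is strictly concave on the shadow
     and continuous on the whole hyperplane.  If K has interior points, the shadow is
     (dim - 1)-dimensional.
  2. The concrete body: V_0(h) lies in the open cube (0, 2 pi)^m, where the function
     ln |s| is strictly concave; hence ln of the product is strictly concave and every open
     segment of V_0(h) lies in the open set where the product exceeds h.  For h < 2^m the
     centre (pi, ..., pi) is such an interior point.
*)


definition proj_along :: "'a::real_inner \<Rightarrow> 'a \<Rightarrow> 'a" where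
  "proj_along d y = y - ((d \<bullet> y) / (d \<bullet> d)) *\<^sub>R d"

definition fibre :: "'a::real_vector \<Rightarrow> 'a set \<Rightarrow> 'a \<Rightarrow> real set" where
  "fibre d K x = {t. x + t *\<^sub>R d \<in> K}"

definition strictly_convex_body :: "'a::real_normed_vector set \<Rightarrow> bool" where
  "strictly_convex_body K \<longleftrightarrow> (\<forall>p\<in>K. \<forall>q\<in>K. p \<noteq> q \<longrightarrow> open_segment p q \<subseteq> interior K)"

lemma strictly_convex_body_convex: "strictly_convex_body K \<Longrightarrow> convex K"
  unfolding strictly_convex_body_def convex_contains_open_segment
  by (metis empty_subsetI interior_subset open_segment_idem order_trans)

lemma proj_along_orthogonal: "d \<noteq> 0 \<Longrightarrow> d \<bullet> proj_along d y = 0"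
  by (simp add: proj_along_def inner_diff_right)

lemma proj_along_decomp: "y = proj_along d y + ((d \<bullet> y) / (d \<bullet> d)) *\<^sub>R d"
  by (simp add: proj_along_def)

lemma line_coordinate: "d \<noteq> 0 \<Longrightarrow> d \<bullet> x = 0 \<Longrightarrow> (d \<bullet> (x + t *\<^sub>R d)) / (d \<bullet> d) = t"
  by (simp add: inner_add_right)

lemma proj_along_line: "d \<noteq> 0 \<Longrightarrow> d \<bullet> x = 0 \<Longrightarrow> proj_along d (x + t *\<^sub>R d) = x"
  by (simp add: proj_along_def line_coordinate)

lemma linear_proj_along: "linear (proj_along d)"
  by (rule linearI) (simp_all add: proj_along_def inner_add_right add_divide_distrib
      scaleR_add_left algebra_simps)

lemma shadow_eq:
  assumes "d \<noteq> 0"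
  shows "{x \<in> {x. d \<bullet> x = 0}. \<exists>t. x + t *\<^sub>R d \<in> K} = proj_along d ` K"
proof (intro set_eqI iffI)
  fix x assume "x \<in> {x \<in> {x. d \<bullet> x = 0}. \<exists>t. x + t *\<^sub>R d \<in> K}"
  then obtain t where "d \<bullet> x = 0" "x + t *\<^sub>R d \<in> K" by auto
  then show "x \<in> proj_along d ` K" using proj_along_line[OF assms] by (metis image_eqI)
next
  fix x assume "x \<in> proj_along d ` K"
  then obtain y where y: "y \<in> K" "x = proj_along d y" by auto
  then have "x + ((d \<bullet> y) / (d \<bullet> d)) *\<^sub>R d \<in> K"
    using proj_along_decomp[of y] by simp
  then show "x \<in> {x \<in> {x. d \<bullet> x = 0}. \<exists>t. x + t *\<^sub>R d \<in> K}"
    using proj_along_orthogonal[OF assms] y by auto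
qed

lemma fibre_nonempty_iff:
  "d \<noteq> 0 \<Longrightarrow> d \<bullet> x = 0 \<Longrightarrow> fibre d K x \<noteq> {} \<longleftrightarrow> x \<in> proj_along d ` K"
  using shadow_eq[of d K] by (auto simp: fibre_def)


lemma fibre_compact:
  fixes K :: "'a::euclidean_space set"
  assumes "compact K" "d \<noteq> 0"
  shows "compact (fibre d K x)"
proof -
  have "closed ((\<lambda>t. x + t *\<^sub>R d) -` K)"
    by (rule continuous_closed_vimage) (use assms compact_imp_closed in \<open>auto intro!: continuous_intros\<close>)
  then have closed: "closed (fibre d K x)"
    by (simp add: fibre_def vimage_def)
  have "fibre d K x \<subseteq> (\<lambda>y. (d \<bullet> (y - x)) / (d \<bullet> d)) ` K"
    using assms(2) by (force simp: fibre_def inner_add_right)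
  moreover have "compact ((\<lambda>y. (d \<bullet> (y - x)) / (d \<bullet> d)) ` K)"
    using assms by (intro compact_continuous_image continuous_intros) auto
  ultimately show ?thesis
    using closed by (metis compact_Int_closed inf.absorb_iff2)
qed

lemma fibre_convex:
  assumes "convex K"
  shows "convex (fibre d K x)"
proof (rule convexI)
  fix s t u v :: real
  assume "s \<in> fibre d K x" "t \<in> fibre d K x" "0 \<le> u" "0 \<le> v" "u + v = 1"
  then have "u *\<^sub>R (x + s *\<^sub>R d) + v *\<^sub>R (x + t *\<^sub>R d) \<in> K"
    using assms by (simp add: fibre_def convexD)
  moreover have "u *\<^sub>R (x + s *\<^sub>R d) + v *\<^sub>R (x + t *\<^sub>R d) = x + (u * s + v * t) *\<^sub>R d"
    using \<open>u + v = 1\<close> by (simp add: algebra_simps flip: scaleR_add_left)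
  ultimately show "u *\<^sub>R s + v *\<^sub>R t \<in> fibre d K x"
    by (simp add: fibre_def)
qed

lemma fibre_interval:
  fixes K :: "'a::euclidean_space set"
  assumes "compact K" "convex K" "d \<noteq> 0" "fibre d K x \<noteq> {}"
  obtains a b where "a \<le> b" "fibre d K x = {a..b}" "measure lborel (fibre d K x) = b - a"
proof -
  have "connected (fibre d K x) \<and> compact (fibre d K x)"
    using fibre_compact[OF assms(1,3)] convex_connected[OF fibre_convex[OF assms(2)]] by blast
  then obtain a b where ab: "fibre d K x = {a..b}"
    using connected_compact_interval_1 by blast
  with assms(4) have "a \<le> b" by auto
  with ab show ?thesis by (intro that) simp_all
qed

lemma fibre_length_le:
  fixes K :: "'a::euclidean_space set"
  assumes "compact K" "convex K" "d \<noteq> 0" "fibre d K x \<subseteq> {\<alpha>..\<beta>}" "\<alpha> \<le> \<beta>"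
  shows "measure lborel (fibre d K x) \<le> \<beta> - \<alpha>"
proof (cases "fibre d K x = {}")
  case False
  then obtain a b where "a \<le> b" "fibre d K x = {a..b}" "measure lborel (fibre d K x) = b - a"
    by (rule fibre_interval[OF assms(1-3)])
  with assms(4) show ?thesis by auto
qed (use assms(5) in simp)

lemma fibre_length_ge:
  fixes K :: "'a::euclidean_space set"
  assumes "compact K" "convex K" "d \<noteq> 0" "s \<in> fibre d K x" "s' \<in> fibre d K x"
  shows "s' - s \<le> measure lborel (fibre d K x)"
proof -
  have "fibre d K x \<noteq> {}" using assms(4) by blast
  then obtain a b where "a \<le> b" "fibre d K x = {a..b}" "measure lborel (fibre d K x) = b - a"
    by (rule fibre_interval[OF assms(1-3)])
  with assms(4,5) show ?thesis by auto
qed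


lemma shadow_compact:
  fixes K :: "'a::euclidean_space set"
  shows "compact K \<Longrightarrow> compact (proj_along d ` K)"
  by (intro compact_continuous_image linear_continuous_on)
     (simp_all add: linear_proj_along flip: linear_conv_bounded_linear)

(* Lifting a point of the hyperplane to the height of z changes distances to z
  as projection does; so a ball around z in K projects onto a disc. *)
lemma shadow_contains_projected_ball:
  assumes "d \<noteq> 0" "ball z r \<subseteq> K" "d \<bullet> w = 0" "w \<in> ball (proj_along d z) r"
  shows "w \<in> proj_along d ` K"
proof -
  let ?c = "(d \<bullet> z) / (d \<bullet> d)"
  have "dist z (w + ?c *\<^sub>R d) = dist (proj_along d z) w"
    using proj_along_decomp[of z] by (metis dist_add_cancel2)
  then have "w + ?c *\<^sub>R d \<in> K" using assms(2,4) by auto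
  then show ?thesis using proj_along_line[OF assms(1,3)] by (metis image_eqI)
qed

lemma shadow_contains_disc:
  assumes "d \<noteq> 0" "z \<in> interior K"
  obtains r where "r > 0" "{x. d \<bullet> x = 0} \<inter> ball (proj_along d z) r \<subseteq> proj_along d ` K"
proof -
  obtain r where "r > 0" "ball z r \<subseteq> interior K"
    using assms(2) open_interior open_contains_ball by blast
  then have "r > 0" "ball z r \<subseteq> K"
    using interior_subset by blast+
  with that show ?thesis
    using shadow_contains_projected_ball[OF assms(1)] by blast
qed

lemma proj_along_rel_interior:
  assumes "d \<noteq> 0" "z \<in> interior K"
  shows "proj_along d z \<in> rel_interior (proj_along d ` K)"
proof -
  obtain r where r: "r > 0" "{x. d \<bullet> x = 0} \<inter> ball (proj_along d z) r \<subseteq> proj_along d ` K"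
    using shadow_contains_disc[OF assms] .
  have "affine hull (proj_along d ` K) \<subseteq> {x. d \<bullet> x = 0}"
    by (rule hull_minimal) (auto simp: affine_hyperplane proj_along_orthogonal[OF assms(1)])
  then have "ball (proj_along d z) r \<inter> affine hull (proj_along d ` K) \<subseteq> proj_along d ` K"
    using r(2) by blast
  moreover have "proj_along d z \<in> proj_along d ` K"
    using assms(2) interior_subset by blast
  ultimately show ?thesis
    unfolding mem_rel_interior_ball using r(1) by blast
qed

lemma proj_along_combination:
  "proj_along d (a *\<^sub>R p + b *\<^sub>R q) = a *\<^sub>R proj_along d p + b *\<^sub>R proj_along d q"
  using linear_proj_along[of d] by (simp add: linear_add linear_scale)

lemma shadow_strictly_convex:
  fixes K :: "'a::euclidean_space set"
  assumes "d \<noteq> 0" "strictly_convex_body K"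
  shows "strictly_convex_set (proj_along d ` K)"
  unfolding strictly_convex_set_def
proof (intro conjI ballI impI subsetI)
  show "convex (proj_along d ` K)"
    using assms(2) strictly_convex_body_convex convex_linear_image linear_proj_along by blast
next
  fix x y z assume "x \<in> proj_along d ` K" "y \<in> proj_along d ` K" "x \<noteq> y"
    and z: "z \<in> open_segment x y"
  then obtain p q where pq: "p \<in> K" "q \<in> K" "x = proj_along d p" "y = proj_along d q" "p \<noteq> q"
    by auto
  obtain u where u: "0 < u" "u < 1" "z = (1 - u) *\<^sub>R x + u *\<^sub>R y"
    using z by (auto simp: in_segment)
  have "(1 - u) *\<^sub>R p + u *\<^sub>R q \<in> open_segment p q"
    using u pq by (auto simp: in_segment)
  then have "(1 - u) *\<^sub>R p + u *\<^sub>R q \<in> interior K"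
    using assms(2) pq by (auto simp: strictly_convex_body_def)
  from proj_along_rel_interior[OF assms(1) this]
  show "z \<in> rel_interior (proj_along d ` K)"
    using u pq by (simp add: proj_along_combination)
qed

lemma shadow_aff_dim:
  fixes K :: "'a::euclidean_space set"
  assumes "d \<noteq> 0" "interior K \<noteq> {}"
  shows "aff_dim (proj_along d ` K) = int DIM('a) - 1"
proof (rule antisym)
  have "proj_along d ` K \<subseteq> {x. d \<bullet> x = 0}"
    using proj_along_orthogonal[OF assms(1)] by auto
  from aff_dim_subset[OF this] assms(1)
  show "aff_dim (proj_along d ` K) \<le> int DIM('a) - 1" by simp
next
  obtain z where z: "z \<in> interior K" using assms(2) by blast
  obtain r where r: "r > 0" "{x. d \<bullet> x = 0} \<inter> ball (proj_along d z) r \<subseteq> proj_along d ` K"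
    using shadow_contains_disc[OF assms(1) z] .
  have "proj_along d z \<in> {x. d \<bullet> x = 0} \<inter> ball (proj_along d z) r"
    using r(1) proj_along_orthogonal[OF assms(1)] by simp
  then have "aff_dim ({x. d \<bullet> x = 0} \<inter> ball (proj_along d z) r) = aff_dim {x. d \<bullet> x = 0}"
    by (intro aff_dim_convex_Int_open convex_hyperplane open_ball) blast
  with aff_dim_subset[OF r(2)] assms(1)
  show "int DIM('a) - 1 \<le> aff_dim (proj_along d ` K)" by simp
qed


lemma fibre_inner_point_interior:
  assumes "strictly_convex_body K" "d \<noteq> 0" "a \<in> fibre d K x" "b \<in> fibre d K x" "a < s" "s < b"
  shows "x + s *\<^sub>R d \<in> interior K"
proof -
  define u where "u = (s - a) / (b - a)"
  have "u * (b - a) = s - a" "0 < u" "u < 1"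
    using assms(5,6) by (auto simp: u_def field_simps)
  then have u: "0 < u" "u < 1" "(1 - u) * a + u * b = s"
    by (auto simp: algebra_simps)
  have "(1 - u) *\<^sub>R (x + a *\<^sub>R d) + u *\<^sub>R (x + b *\<^sub>R d) = x + ((1 - u) * a + u * b) *\<^sub>R d"
    by (simp add: algebra_simps)
  moreover have ne: "x + a *\<^sub>R d \<noteq> x + b *\<^sub>R d"
    using assms(2,5,6) by auto
  ultimately have "x + s *\<^sub>R d \<in> open_segment (x + a *\<^sub>R d) (x + b *\<^sub>R d)"
    using u unfolding in_segment by metis
  then show ?thesis
    using assms(1,3,4) ne unfolding strictly_convex_body_def fibre_def by blast
qed

lemma fibre_slack:
  fixes K :: "'a::real_normed_vector set"
  assumes "x + c *\<^sub>R d \<in> interior K"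
  shows "\<exists>e>0. c - e \<in> fibre d K x \<and> c + e \<in> fibre d K x"
proof -
  have "open ((\<lambda>t. x + t *\<^sub>R d) -` interior K)"
    by (rule continuous_open_vimage) (auto intro!: continuous_intros)
  then have "open (fibre d (interior K) x)"
    by (simp add: fibre_def vimage_def)
  moreover have "c \<in> fibre d (interior K) x" using assms by (simp add: fibre_def)
  ultimately obtain e where e: "e > 0" "ball c e \<subseteq> fibre d (interior K) x"
    using open_contains_ball by blast
  have "fibre d (interior K) x \<subseteq> fibre d K x"
    using interior_subset by (auto simp: fibre_def)
  moreover have "c - e / 2 \<in> ball c e" "c + e / 2 \<in> ball c e"
    using e(1) by (auto simp: dist_real_def)
  ultimately have "c - e / 2 \<in> fibre d K x" "c + e / 2 \<in> fibre d K x"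
    using e(2) by blast+
  with e(1) show ?thesis by (intro exI[of _ "e / 2"]) auto
qed

(* Combining fibre points over two distinct base points gives an interior point over the
  combined base point; this is the source of strict concavity. *)
lemma fibre_combination_interior:
  assumes "strictly_convex_body K" "d \<noteq> 0" "d \<bullet> x = 0" "d \<bullet> y = 0" "x \<noteq> y"
    "s \<in> fibre d K x" "t \<in> fibre d K y" "0 < u" "u < 1"
  shows "((1 - u) *\<^sub>R x + u *\<^sub>R y) + ((1 - u) * s + u * t) *\<^sub>R d \<in> interior K"
proof -
  let ?p = "x + s *\<^sub>R d" and ?q = "y + t *\<^sub>R d"
  have "proj_along d ?p \<noteq> proj_along d ?q"
    using assms(5) by (simp add: proj_along_line assms(2-4))
  then have "?p \<noteq> ?q" by auto
  then have "(1 - u) *\<^sub>R ?p + u *\<^sub>R ?q \<in> open_segment ?p ?q"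
    unfolding in_segment using assms(8,9) by blast
  moreover have "open_segment ?p ?q \<subseteq> interior K"
    using assms(1,6,7) \<open>?p \<noteq> ?q\<close> unfolding strictly_convex_body_def fibre_def by blast
  ultimately have "(1 - u) *\<^sub>R ?p + u *\<^sub>R ?q \<in> interior K" by blast
  moreover have "(1 - u) *\<^sub>R ?p + u *\<^sub>R ?q = ((1 - u) *\<^sub>R x + u *\<^sub>R y) + ((1 - u) * s + u * t) *\<^sub>R d"
    by (simp add: algebra_simps)
  ultimately show ?thesis by simp
qed

lemma fibre_length_strictly_concave:
  fixes K :: "'a::euclidean_space set"
  assumes "compact K" "strictly_convex_body K" "d \<noteq> 0"
  shows "strictly_concave_on (proj_along d ` K) (\<lambda>x. measure lborel (fibre d K x))"
  unfolding strictly_concave_on_def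
proof (intro conjI ballI allI impI)
  have cK: "convex K" using strictly_convex_body_convex assms(2) by blast
  show cS: "convex (proj_along d ` K)" using cK linear_proj_along convex_linear_image by blast
  fix x y and u :: real
  assume xy: "x \<in> proj_along d ` K" "y \<in> proj_along d ` K" and "x \<noteq> y \<and> 0 < u \<and> u < 1"
  then have u: "x \<noteq> y" "0 < u" "u < 1" by auto
  let ?z = "(1 - u) *\<^sub>R x + u *\<^sub>R y"
  have orth: "d \<bullet> x = 0" "d \<bullet> y = 0" "d \<bullet> ?z = 0"
    using xy proj_along_orthogonal[OF assms(3)] by (auto simp: inner_add_right)
  have ne: "fibre d K x \<noteq> {}" "fibre d K y \<noteq> {}"
    using xy orth fibre_nonempty_iff[OF assms(3)] by auto
  obtain ax bx where X: "ax \<le> bx" "fibre d K x = {ax..bx}" "measure lborel (fibre d K x) = bx - ax"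
    using fibre_interval[OF assms(1) cK assms(3) ne(1)] .
  obtain ay by' where Y: "ay \<le> by'" "fibre d K y = {ay..by'}" "measure lborel (fibre d K y) = by' - ay"
    using fibre_interval[OF assms(1) cK assms(3) ne(2)] .
  have comb: "\<exists>e>0. (1 - u) * s + u * t - e \<in> fibre d K ?z \<and> (1 - u) * s + u * t + e \<in> fibre d K ?z"
    if "s \<in> fibre d K x" "t \<in> fibre d K y" for s t
    by (rule fibre_slack[OF fibre_combination_interior[OF assms(2,3) orth(1,2) u(1) that u(2,3)]])
  obtain e1 where e1: "e1 > 0" "(1 - u) * bx + u * by' + e1 \<in> fibre d K ?z"
    using comb[of bx by'] X Y by auto
  obtain e2 where e2: "e2 > 0" "(1 - u) * ax + u * ay - e2 \<in> fibre d K ?z"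
    using comb[of ax ay] X Y by auto
  have "((1 - u) * bx + u * by' + e1) - ((1 - u) * ax + u * ay - e2) \<le> measure lborel (fibre d K ?z)"
    by (rule fibre_length_ge[OF assms(1) cK assms(3) e2(2) e1(2)])
  moreover have "((1 - u) * bx + u * by' + e1) - ((1 - u) * ax + u * ay - e2)
      = (1 - u) * (bx - ax) + u * (by' - ay) + (e1 + e2)"
    by (simp add: algebra_simps)
  ultimately have "(1 - u) * (bx - ax) + u * (by' - ay) < measure lborel (fibre d K ?z)"
    using e1(1) e2(1) by linarith
  then show "measure lborel (fibre d K ?z)
      > (1 - u) * measure lborel (fibre d K x) + u * measure lborel (fibre d K y)"
    by (simp only: X(3) Y(3))
qed

lemma fibre_subset_iff:
  assumes "d \<noteq> 0" "d \<bullet> x = 0"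
  shows "fibre d K x \<subseteq> I \<longleftrightarrow>
    x \<notin> proj_along d ` (K \<inter> (\<lambda>y. (d \<bullet> y) / (d \<bullet> d)) -` (- I))"
proof -
  have outside: "x \<in> proj_along d ` (K \<inter> (\<lambda>y. (d \<bullet> y) / (d \<bullet> d)) -` (- I))"
    if "t \<in> fibre d K x" "t \<notin> I" for t
    using that line_coordinate[OF assms, of t] proj_along_line[OF assms, of t]
    by (intro image_eqI[where x = "x + t *\<^sub>R d"]) (auto simp: fibre_def)
  have "\<exists>t. t \<in> fibre d K x \<and> t \<notin> I"
    if "x \<in> proj_along d ` (K \<inter> (\<lambda>y. (d \<bullet> y) / (d \<bullet> d)) -` (- I))"
    using that by (clarsimp simp: fibre_def) (metis proj_along_decomp)
  with outside show ?thesis by blast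
qed

(* Upper semicontinuity of the fibre: by compactness, fibres over nearby points of the
  hyperplane stay within any neighbourhood of a bounding interval of the fibre over x0. *)
lemma fibre_eventually_within:
  fixes K :: "'a::euclidean_space set"
  assumes "compact K" "d \<noteq> 0" "d \<bullet> x0 = 0" "fibre d K x0 \<subseteq> {a..b}" "\<eta> > 0"
  shows "\<forall>\<^sub>F x in nhds x0. d \<bullet> x = 0 \<longrightarrow> fibre d K x \<subseteq> {a - \<eta>..b + \<eta>}"
proof -
  let ?coord = "\<lambda>y. (d \<bullet> y) / (d \<bullet> d)" and ?I = "{a - \<eta> <..< b + \<eta>}"
  let ?C = "proj_along d ` (K \<inter> ?coord -` (- ?I))"
  have "closed (?coord -` (- ?I))"
    by (intro closed_vimage closed_Compl open_greaterThanLessThan)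
       (use assms(2) in \<open>auto intro!: continuous_intros\<close>)
  then have "compact (K \<inter> ?coord -` (- ?I))"
    by (rule compact_Int_closed[OF assms(1)])
  then have "closed ?C"
    by (intro compact_imp_closed shadow_compact)
  moreover have "x0 \<notin> ?C"
    using fibre_subset_iff[OF assms(2,3), where K = K and I = ?I] assms(4,5) by force
  ultimately have avoid: "\<forall>\<^sub>F x in nhds x0. x \<notin> ?C"
    using eventually_nhds_in_open[of "- ?C" x0] by auto
  have "fibre d K x \<subseteq> {a - \<eta>..b + \<eta>}" if "d \<bullet> x = 0" "x \<notin> ?C" for x
    using fibre_subset_iff[OF assms(2) that(1), where K = K and I = ?I] that(2) by auto
  then show ?thesis
    using avoid by (auto elim!: eventually_mono)
qed

lemma fibre_eventually_contains:
  fixes K :: "'a::real_normed_vector set"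
  assumes "x0 + s *\<^sub>R d \<in> interior K"
  shows "\<forall>\<^sub>F x in nhds x0. s \<in> fibre d K x"
proof -
  have "open ((\<lambda>x. x + s *\<^sub>R d) -` interior K)"
    by (intro open_vimage open_interior continuous_intros)
  then have "\<forall>\<^sub>F x in nhds x0. x + s *\<^sub>R d \<in> interior K"
    using eventually_nhds_in_open[of "(\<lambda>x. x + s *\<^sub>R d) -` interior K" x0] assms by simp
  then show ?thesis
    using interior_subset by (auto simp: fibre_def elim!: eventually_mono)
qed

(* Consequently the fibre length is upper semicontinuous ... *)
lemma fibre_length_eventually_le:
  fixes K :: "'a::euclidean_space set"
  assumes "compact K" "convex K" "d \<noteq> 0" "d \<bullet> x0 = 0" "fibre d K x0 \<subseteq> {a..b}" "a \<le> b" "\<eta> > 0"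
  shows "\<forall>\<^sub>F x in nhds x0. d \<bullet> x = 0 \<longrightarrow> measure lborel (fibre d K x) \<le> b - a + 2 * \<eta>"
proof -
  have "a - \<eta> \<le> b + \<eta>" using assms(6,7) by simp
  then have "measure lborel (fibre d K x) \<le> b - a + 2 * \<eta>"
    if "fibre d K x \<subseteq> {a - \<eta>..b + \<eta>}" for x
    using fibre_length_le[OF assms(1-3) that] by simp
  then show ?thesis
    using fibre_eventually_within[OF assms(1,3,4,5,7)] by (auto elim!: eventually_mono)
qed

(* ... and, for a strictly convex body, lower semicontinuous. *)
lemma fibre_length_eventually_ge:
  fixes K :: "'a::euclidean_space set"
  assumes "compact K" "strictly_convex_body K" "d \<noteq> 0" "fibre d K x0 = {a..b}" "\<eta> > 0"
  shows "\<forall>\<^sub>F x in nhds x0. b - a - 2 * \<eta> \<le> measure lborel (fibre d K x)"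
proof (cases "a < b")
  case True
  have cK: "convex K" using strictly_convex_body_convex assms(2) by blast
  define \<eta>' where "\<eta>' = min \<eta> ((b - a) / 3)"
  have \<eta>': "0 < \<eta>'" "\<eta>' \<le> \<eta>" "a + \<eta>' < b - \<eta>'"
    using assms(5) True min.cobounded2[of \<eta> "(b - a) / 3"] by (auto simp: \<eta>'_def)
  have ends: "a \<in> fibre d K x0" "b \<in> fibre d K x0" using assms(4) True by auto
  have inner: "\<forall>\<^sub>F x in nhds x0. a + \<eta>' \<in> fibre d K x \<and> b - \<eta>' \<in> fibre d K x"
    using \<eta>' by (intro eventually_conj fibre_eventually_contains
        fibre_inner_point_interior[OF assms(2,3) ends]) auto
  have "b - a - 2 * \<eta> \<le> measure lborel (fibre d K x)"
    if "a + \<eta>' \<in> fibre d K x" "b - \<eta>' \<in> fibre d K x" for x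
    using fibre_length_ge[OF assms(1) cK assms(3) that] \<eta>' by linarith
  then show ?thesis
    using inner by (auto elim!: eventually_mono)
next
  case False
  with assms(4,5) have "b - a - 2 * \<eta> \<le> 0" by simp
  then show ?thesis
    by (intro always_eventually allI) (auto intro: order_trans[OF _ measure_nonneg])
qed

lemma fibre_length_continuous_at:
  fixes K :: "'a::euclidean_space set"
  assumes K: "compact K" "strictly_convex_body K" and d: "d \<noteq> 0" "d \<bullet> x0 = 0" and "e > 0"
  shows "\<forall>\<^sub>F x in nhds x0. d \<bullet> x = 0 \<longrightarrow>
           \<bar>measure lborel (fibre d K x) - measure lborel (fibre d K x0)\<bar> < e"
proof (cases "x0 \<in> proj_along d ` K")
  case False
  have "closed (proj_along d ` K)" using shadow_compact[OF K(1)] compact_imp_closed by blast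
  then have off: "\<forall>\<^sub>F x in nhds x0. x \<notin> proj_along d ` K"
    using False eventually_nhds_in_open[of "- proj_along d ` K" x0] by auto
  have empty: "fibre d K y = {}" if "d \<bullet> y = 0" "y \<notin> proj_along d ` K" for y
    using fibre_nonempty_iff[OF d(1) that(1)] that(2) by blast
  show ?thesis
    by (rule eventually_mono[OF off]) (use empty False d(2) \<open>e > 0\<close> in auto)
next
  case True
  have cK: "convex K" using strictly_convex_body_convex K(2) by blast
  have "fibre d K x0 \<noteq> {}" using True fibre_nonempty_iff[OF d] by blast
  then obtain a b where ab: "a \<le> b" "fibre d K x0 = {a..b}" "measure lborel (fibre d K x0) = b - a"
    by (rule fibre_interval[OF K(1) cK d(1)])
  have \<eta>: "e / 3 > 0" using \<open>e > 0\<close> by simp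
  have upper: "\<forall>\<^sub>F x in nhds x0. d \<bullet> x = 0 \<longrightarrow> measure lborel (fibre d K x) \<le> b - a + 2 * (e / 3)"
    using fibre_length_eventually_le[OF K(1) cK d _ ab(1) \<eta>] ab(2) by simp
  have lower: "\<forall>\<^sub>F x in nhds x0. b - a - 2 * (e / 3) \<le> measure lborel (fibre d K x)"
    by (rule fibre_length_eventually_ge[OF K d(1) ab(2) \<eta>])
  show ?thesis
    by (rule eventually_mono[OF eventually_conj[OF upper lower]])
       (use ab(3) \<open>e > 0\<close> in \<open>auto simp: abs_less_iff\<close>)
qed

lemma fibre_length_continuous:
  fixes K :: "'a::euclidean_space set"
  assumes "compact K" "strictly_convex_body K" "d \<noteq> 0"
  shows "continuous_on {x. d \<bullet> x = 0} (\<lambda>x. measure lborel (fibre d K x))"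
  unfolding continuous_on_def tendsto_iff eventually_at_filter dist_real_def
proof (intro ballI allI impI)
  fix x0 :: 'a and e :: real
  assume "x0 \<in> {x. d \<bullet> x = 0}" "e > 0"
  then show "\<forall>\<^sub>F x in nhds x0. x \<noteq> x0 \<longrightarrow> x \<in> {x. d \<bullet> x = 0} \<longrightarrow>
      \<bar>measure lborel (fibre d K x) - measure lborel (fibre d K x0)\<bar> < e"
    by (intro eventually_mono[OF fibre_length_continuous_at[OF assms]]) auto
qed

lemma strictly_concave_on_scale:
  assumes "strictly_concave_on S f" "c > 0"
  shows "strictly_concave_on S (\<lambda>x. c * f x)"
  unfolding strictly_concave_on_def
proof (intro conjI ballI allI impI)
  show "convex S" using assms(1) by (simp add: strictly_concave_on_def)
  fix x y and u :: real
  assume "x \<in> S" "y \<in> S" "x \<noteq> y \<and> 0 < u \<and> u < 1"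
  then have "c * ((1 - u) * f x + u * f y) < c * f ((1 - u) *\<^sub>R x + u *\<^sub>R y)"
    using assms by (intro mult_strict_left_mono) (auto simp: strictly_concave_on_def)
  then show "(1 - u) * (c * f x) + u * (c * f y) < c * f ((1 - u) *\<^sub>R x + u *\<^sub>R y)"
    by (simp add: algebra_simps)
qed


lemma strictly_concave_by_derivative:
  fixes f f' :: "real \<Rightarrow> real"
  assumes der: "\<And>x. a \<le> x \<Longrightarrow> x \<le> b \<Longrightarrow> (f has_real_derivative f' x) (at x)"
    and dec: "\<And>x y. a \<le> x \<Longrightarrow> x < y \<Longrightarrow> y \<le> b \<Longrightarrow> f' y < f' x"
    and ab: "a < b" and u: "0 < u" "u < 1"
  shows "f ((1 - u) * a + u * b) > (1 - u) * f a + u * f b"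
proof -
  define m where "m = (1 - u) * a + u * b"
  have ma: "m - a = u * (b - a)" and bm: "b - m = (1 - u) * (b - a)"
    by (simp_all add: m_def algebra_simps)
  have pos: "0 < u * (b - a)" "0 < (1 - u) * (b - a)"
    using u ab by simp_all
  have am: "a < m" "m < b"
    using pos unfolding ma [symmetric] bm [symmetric] by simp_all
  obtain z1 where z1: "a < z1" "z1 < m" "f m - f a = (m - a) * f' z1"
    using MVT2[OF am(1), of f f'] der am by auto
  obtain z2 where z2: "m < z2" "z2 < b" "f b - f m = (b - m) * f' z2"
    using MVT2[OF am(2), of f f'] der am by auto
  have "f m - ((1 - u) * f a + u * f b) = (1 - u) * (f m - f a) - u * (f b - f m)"
    by (simp add: algebra_simps)
  also have "\<dots> = (1 - u) * (u * (b - a) * f' z1) - u * ((1 - u) * (b - a) * f' z2)"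
    using z1(3) z2(3) ma bm by simp
  also have "\<dots> = u * (1 - u) * (b - a) * (f' z1 - f' z2)"
    by (simp add: algebra_simps)
  also have "\<dots> > 0"
    using u ab dec[of z1 z2] z1 z2 by simp
  finally show ?thesis by (simp add: m_def)
qed

lemma sfun_pos: "0 < t \<Longrightarrow> t < 2 * pi \<Longrightarrow> sfun t > 0"
  by (simp add: sfun_def sin_gt_zero)

lemma ln_sfun_deriv:
  assumes "0 < t" "t < 2 * pi"
  shows "((\<lambda>t. ln (sfun t)) has_real_derivative cos (t / 2) / (2 * sin (t / 2))) (at t)"
  unfolding sfun_def using sfun_pos[OF assms]
  by (auto intro!: derivative_eq_intros simp: sfun_def)

lemma ln_sfun_deriv_decreasing:
  assumes "0 < y" "y < x" "x < 2 * pi"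
  shows "cos (x / 2) / (2 * sin (x / 2)) < cos (y / 2) / (2 * sin (y / 2))"
proof -
  have sx: "sin (x / 2) > 0" and sy: "sin (y / 2) > 0" using assms by (auto intro!: sin_gt_zero)
  have "sin (x / 2 - y / 2) > 0" using assms by (intro sin_gt_zero) auto
  then have "cos (x / 2) * sin (y / 2) < cos (y / 2) * sin (x / 2)"
    by (simp add: sin_diff algebra_simps)
  then show ?thesis using sx sy by (simp add: field_simps)
qed

lemma ln_sfun_strictly_concave_ordered:
  assumes "0 < a" "a < b" "b < 2 * pi" "0 < u" "u < 1"
  shows "ln (sfun ((1 - u) * a + u * b)) > (1 - u) * ln (sfun a) + u * ln (sfun b)"
  by (rule strictly_concave_by_derivative[where f' = "\<lambda>t. cos (t / 2) / (2 * sin (t / 2))"])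
     (use assms in \<open>auto intro!: ln_sfun_deriv ln_sfun_deriv_decreasing\<close>)

lemma ln_sfun_strictly_concave:
  assumes "0 < a" "a < 2 * pi" "0 < b" "b < 2 * pi" "a \<noteq> b" "0 < u" "u < 1"
  shows "ln (sfun ((1 - u) * a + u * b)) > (1 - u) * ln (sfun a) + u * ln (sfun b)"
  using ln_sfun_strictly_concave_ordered[of a b u] ln_sfun_strictly_concave_ordered[of b a "1 - u"]
    assms by (cases "a < b") (auto simp: algebra_simps)

abbreviation open_cube :: "(real ^ 'n) set" where
  "open_cube \<equiv> box 0 (\<chi> j. 2 * pi)"

lemma ln_prod_sfun_strictly_concave:
  fixes p q :: "real ^ 'n"
  assumes "p \<in> open_cube" "q \<in> open_cube" "p \<noteq> q" "0 < u" "u < 1"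
  shows "(1 - u) * ln (\<Prod>j\<in>UNIV. sfun (p $ j)) + u * ln (\<Prod>j\<in>UNIV. sfun (q $ j))
           < ln (\<Prod>j\<in>UNIV. sfun (((1 - u) *\<^sub>R p + u *\<^sub>R q) $ j))"
proof -
  let ?z = "(1 - u) *\<^sub>R p + u *\<^sub>R q"
  have "?z \<in> open_cube"
    by (rule convexD[OF convex_box(2)]) (use assms in auto)
  then have pos: "sfun (x $ j) > 0" if "x \<in> {p, q, ?z}" for x j
    using that assms by (auto simp: mem_box_cart intro!: sfun_pos)
  have ln_prod_eq: "ln (\<Prod>j\<in>UNIV. sfun (x $ j)) = (\<Sum>j\<in>UNIV. ln (sfun (x $ j)))"
    if "x \<in> {p, q, ?z}" for x
    using pos[OF that] by (intro ln_prod) (auto simp: less_imp_neq[symmetric])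
  have strict: "(1 - u) * ln (sfun (p $ j)) + u * ln (sfun (q $ j)) < ln (sfun (?z $ j))"
    if "p $ j \<noteq> q $ j" for j
    using ln_sfun_strictly_concave[of "p $ j" "q $ j" u] assms(1,2,4,5) that
    by (simp add: mem_box_cart)
  have coord: "(1 - u) * ln (sfun (p $ j)) + u * ln (sfun (q $ j)) \<le> ln (sfun (?z $ j))" for j
    using strict[of j] by (cases "p $ j = q $ j") (simp_all add: algebra_simps)
  obtain j0 where "p $ j0 \<noteq> q $ j0" using assms(3) by (auto simp: vec_eq_iff)
  then have "(\<Sum>j\<in>UNIV. (1 - u) * ln (sfun (p $ j)) + u * ln (sfun (q $ j)))
      < (\<Sum>j\<in>UNIV. ln (sfun (?z $ j)))"
    using coord strict by (intro sum_strict_mono_ex1) auto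
  then show ?thesis
    using ln_prod_eq[of p] ln_prod_eq[of q] ln_prod_eq[of ?z]
    by (simp add: sum.distrib sum_distrib_left)
qed


(* The part of V_0(h) where the product strictly exceeds h inside the open cube;
  it is open and, as shown below, contains all open segments of V_0(h). *)
definition VV0_core :: "real \<Rightarrow> (real ^ 'n) set" where
  "VV0_core h = open_cube \<inter> {x. h < \<bar>\<Prod>j\<in>UNIV. sfun (x $ j)\<bar>}"

lemma VV0_core_open: "open (VV0_core h)"
  unfolding VV0_core_def sfun_def by (intro open_Int open_box open_Collect_less continuous_intros) auto

lemma VV0_core_subset: "VV0_core h \<subseteq> VV0 h"
  by (auto simp: VV0_core_def VV0_def VV_def mem_box_cart less_imp_le)

lemma VV0_compact: "compact (VV0 h)"
proof -
  have "VV0 h = cbox 0 (\<chi> j. 2 * pi) \<inter> {x. h \<le> \<bar>\<Prod>j\<in>UNIV. sfun (x $ j)\<bar>}"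
    by (auto simp: VV0_def VV_def mem_box_cart)
  moreover have "closed {x :: real ^ 'n. h \<le> \<bar>\<Prod>j\<in>UNIV. sfun (x $ j)\<bar>}"
    unfolding sfun_def by (intro closed_Collect_le continuous_intros) auto
  ultimately show ?thesis by (metis compact_Int_closed compact_cbox)
qed

(* For h > 0 the product vanishes on the boundary of the cube, so V_0(h) lies in the
  open cube. *)
lemma VV0_in_open_cube:
  assumes "p \<in> VV0 h" "0 < h"
  shows "p \<in> open_cube"
proof -
  have h: "h \<le> \<bar>\<Prod>j\<in>UNIV. sfun (p $ j)\<bar>" and cube: "\<forall>j. 0 \<le> p $ j \<and> p $ j \<le> 2 * pi"
    using assms(1) unfolding VV0_def VV_def by auto
  have "(\<Prod>j\<in>UNIV. sfun (p $ j)) \<noteq> 0"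
    using h assms(2) by (metis abs_zero leD)
  then have nonzero: "sfun (p $ j) \<noteq> 0" for j
    by (simp add: prod_zero_iff)
  have "p $ j \<noteq> 0" "p $ j \<noteq> 2 * pi" for j
    using nonzero[of j] by (auto simp: sfun_def)
  with cube show ?thesis by (auto simp: mem_box_cart order.order_iff_strict)
qed

lemma VV0_open_segment_core:
  assumes "0 < h" "p \<in> VV0 h" "q \<in> VV0 h" "p \<noteq> q" "0 < u" "u < 1"
  shows "(1 - u) *\<^sub>R p + u *\<^sub>R q \<in> VV0_core h"
proof -
  let ?z = "(1 - u) *\<^sub>R p + u *\<^sub>R q" and ?P = "\<lambda>x :: real ^ 'n. \<Prod>j\<in>UNIV. sfun (x $ j)"
  have cube: "p \<in> open_cube" "q \<in> open_cube"
    using VV0_in_open_cube assms by auto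
  then have cube: "p \<in> open_cube" "q \<in> open_cube" "?z \<in> open_cube"
    using convexD[OF convex_box(2) cube, of "1 - u" u] assms(5,6) by auto
  have pos: "?P x > 0" if "x \<in> open_cube" for x
    using that by (auto simp: mem_box_cart intro!: prod_pos sfun_pos)
  have "h \<le> ?P p" "h \<le> ?P q"
    using assms(2,3) pos[OF cube(1)] pos[OF cube(2)] by (auto simp: VV0_def VV_def)
  then have "ln h \<le> ln (?P p)" "ln h \<le> ln (?P q)"
    using assms(1) by simp_all
  then have "(1 - u) * ln h + u * ln h \<le> (1 - u) * ln (?P p) + u * ln (?P q)"
    using assms(5,6) by (intro add_mono mult_left_mono) auto
  then have "ln h < ln (?P ?z)"
    using ln_prod_sfun_strictly_concave[OF cube(1,2) assms(4-6)] by (simp add: algebra_simps)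
  then show ?thesis
    using assms(1) pos[OF cube(3)] cube(3) by (simp add: VV0_core_def)
qed

lemma VVk_eq_translation: "VVk h k = (+) (\<chi> j. 2 * pi * of_int (k $ j)) ` VV0 h"
  unfolding VVk_def by (rule image_cong) (auto simp: add.commute)

lemma VVk_compact: "compact (VVk h k)"
  unfolding VVk_eq_translation by (rule compact_translation[OF VV0_compact])

lemma VVk_core_interior:
  "(+) (\<chi> j. 2 * pi * of_int (k $ j)) ` VV0_core h \<subseteq> interior (VVk h k)"
  unfolding VVk_eq_translation
  by (intro interior_maximal image_mono VV0_core_subset open_translation VV0_core_open)

lemma VVk_strictly_convex_body:
  assumes "0 < h"
  shows "strictly_convex_body (VVk h k)"
  unfolding strictly_convex_body_def
proof (intro ballI impI subsetI)
  let ?c = "\<chi> j. 2 * pi * of_int (k $ j)"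
  fix p q z assume "p \<in> VVk h k" "q \<in> VVk h k" "p \<noteq> q" and z: "z \<in> open_segment p q"
  then obtain p' q' where "p' \<in> VV0 h" "q' \<in> VV0 h" "p = ?c + p'" "q = ?c + q'"
    unfolding VVk_eq_translation by blast
  moreover from this z obtain u where "p' \<noteq> q'" "0 < u" "u < 1" "z = ?c + ((1 - u) *\<^sub>R p' + u *\<^sub>R q')"
    by (auto simp: in_segment algebra_simps)
  ultimately have "z \<in> (+) ?c ` VV0_core h"
    using VV0_open_segment_core[OF assms] by blast
  then show "z \<in> interior (VVk h k)" using VVk_core_interior by blast
qed

(* For h < 2^m the centre of the cube, where the product equals 2^m, is a core point. *)
lemma VVk_interior_nonempty:
  assumes "h < 2 ^ CARD('n)"
  shows "interior (VVk h k :: (real ^ 'n) set) \<noteq> {}"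
proof -
  have "(\<chi> j. pi) \<in> (VV0_core h :: (real ^ 'n) set)"
    using assms by (simp add: VV0_core_def sfun_def mem_box_cart)
  then show ?thesis using VVk_core_interior[of k h] by blast
qed


lemma EE_nonzero: "(EE :: real ^ 'n) \<noteq> 0"
  by (simp add: EE_def vec_eq_iff)

lemma HH_hyperplane: "HH = {x :: real ^ 'n. EE \<bullet> x = 0}"
  by (simp add: HH_def EE_def inner_vec_def)

theorem lemma7:
  fixes h :: real and k :: "int ^ 'n::{finite,wellorder}"
  assumes "CARD('n) \<ge> 2"
    and "0 < h" and "h < 2 ^ CARD('n)"
    and "k \<in> Z0"
  shows "supp_tau h k \<subseteq> HH
       \<and> compact (supp_tau h k)
       \<and> strictly_convex_set (supp_tau h k)
       \<and> aff_dim (supp_tau h k) = int CARD('n) - 1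
       \<and> (\<forall>x\<in>supp_tau h k. 0 \<le> tau h k x)
       \<and> strictly_concave_on (supp_tau h k) (tau h k)
       \<and> continuous_on HH (tau h k)"
proof -
  let ?K = "VVk h k"
  have supp: "supp_tau h k = proj_along EE ` ?K"
    unfolding supp_tau_def HH_hyperplane using shadow_eq[OF EE_nonzero] by simp
  have tau: "tau h k = (\<lambda>x. norm (EE :: real ^ 'n::{finite,wellorder}) * measure lborel (fibre EE ?K x))"
    by (simp add: tau_def fibre_def fun_eq_iff)
  have K: "compact ?K" "strictly_convex_body ?K" "interior ?K \<noteq> {}"
    using VVk_compact VVk_strictly_convex_body[OF assms(2)] VVk_interior_nonempty[OF assms(3)]
    by auto
  have "supp_tau h k \<subseteq> HH"
    unfolding supp HH_hyperplane using proj_along_orthogonal[OF EE_nonzero] by auto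
  moreover have "strictly_concave_on (supp_tau h k) (tau h k)"
    unfolding supp tau using EE_nonzero
    by (intro strictly_concave_on_scale fibre_length_strictly_concave K) auto
  moreover have "continuous_on HH (tau h k)"
    unfolding tau HH_hyperplane
    by (intro continuous_on_mult_left fibre_length_continuous K EE_nonzero)
  ultimately show ?thesis
    unfolding supp using shadow_compact[OF K(1)] shadow_strictly_convex[OF EE_nonzero K(2)]
      shadow_aff_dim[OF EE_nonzero K(3)] by (simp add: tau)
qed

end
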